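(* For $b,c\in(-1,\infty)$, with $f$ as defined in the context: (1) if $b=c$, then $f(b,c)=1$; (2) if $b>c$, then $\left(\frac{c+1}{b+1}\right)^2<f(b,c)<1$; (3) if $b<c$, then $1<f(b,c)<\left(\frac{c+1}{b+1}\right)^2$.
   Context: Let $u_n=(-1)^{s_2(n)}$, where $s_2(n)$ is the sum of the binary digits of the non-negative integer $n$ (Thue–Morse sequence with values $\pm1$). For $b,c\in\mathbb C\setminus\{-1,-2,-3,\dots\}$ define $f(b,c)=\prod_{n=1}^\infty\left(\frac{n+b}{n+c}\right)^{u_n}$ (limit of partial products; this converges for all such $b,c$). *)

theory Defs
  imports "HOL-Analysis.Analysis"
begin

fun s2 :: "nat \<Rightarrow> nat" where
  "s2 n = (if n = 0 then 0 else n mod 2 + s2 (n div 2))"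

declare s2.simps [simp del]

definition tm :: "nat \<Rightarrow> int" where
  "tm n = (-1) ^ s2 n"

definition tm_partial :: "complex \<Rightarrow> complex \<Rightarrow> nat \<Rightarrow> complex" where
  "tm_partial b c N = (\<Prod>n=1..N. ((of_nat n + b) / (of_nat n + c)) powi tm n)"

definition tm_f :: "complex \<Rightarrow> complex \<Rightarrow> complex" where
  "tm_f b c = lim (tm_partial b c)"

end

theory Submission
  imports Defs "HOL-Real_Asymp.Real_Asymp"
begin

text \<open>With \<open>a n = ln ((n + b) / (n + c))\<close> the logarithm of the partial product is
  \<open>\<Sum> u n * a n\<close>. Since \<open>u (2k+1) = - u (2k)\<close>, the partial sums \<open>u 1 + ... + u m\<close> only
  take the values -2, -1, 0, and \<open>u 1 = -1\<close>. For \<open>b > c\<close> the sequence \<open>a n\<close> decreases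
  strictly to 0, so Abel summation rewrites the series as \<open>\<Sum> (u 1 + ... + u n) * (a n - a (n+1))\<close>,
  a convergent series of nonpositive terms whose sum lies strictly between \<open>-2 * a 1\<close> and 0;
  exponentiating gives the bounds. Swapping \<open>b\<close> and \<open>c\<close> inverts every factor, which gives the
  case \<open>b < c\<close>.\<close>

lemma s2_double: "s2 (2 * k) = s2 k"
  by (cases "k = 0") (simp_all add: s2.simps[of "2 * k"])

lemma s2_Suc_double: "s2 (Suc (2 * k)) = Suc (s2 k)"
  using s2.simps[of "Suc (2 * k)"] by simp

lemma tm_0 [simp]: "tm 0 = 1"
  by (simp add: tm_def s2.simps)

lemma tm_Suc_double: "tm (Suc (2 * k)) = - tm (2 * k)"
  by (simp add: tm_def s2_double s2_Suc_double)

lemma tm_Suc_0: "tm (Suc 0) = -1"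
  using tm_Suc_double[of 0] by simp

lemma tm_eq_1_or_minus_1: "tm n = 1 \<or> tm n = -1"
  unfolding tm_def by (cases "even (s2 n)") auto

lemma sum_tm_lessThan_double: "(\<Sum>k<2 * m. tm k) = 0"
  by (induction m) (simp_all add: tm_Suc_double)

lemma sum_tm_lessThan_bounds: "-1 \<le> (\<Sum>k<n. tm k) \<and> (\<Sum>k<n. tm k) \<le> 1"
proof (cases "even n")
  case True
  then obtain m where "n = 2 * m" by blast
  then show ?thesis using sum_tm_lessThan_double[of m] by simp
next
  case False
  then obtain m where "n = Suc (2 * m)" by (metis oddE Suc_eq_plus1)
  then have "(\<Sum>k<n. tm k) = tm (2 * m)" using sum_tm_lessThan_double[of m] by simp
  then show ?thesis using tm_eq_1_or_minus_1[of "2 * m"] by auto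
qed

lemma sum_tm_Suc_bounds: "-2 \<le> (\<Sum>k<m. tm (Suc k)) \<and> (\<Sum>k<m. tm (Suc k)) \<le> 0"
proof -
  have "(\<Sum>k<Suc m. tm k) = 1 + (\<Sum>k<m. tm (Suc k))"
    by (simp only: sum.lessThan_Suc_shift tm_0)
  then show ?thesis using sum_tm_lessThan_bounds[of "Suc m"] by linarith
qed

lemma sum_lessThan_by_parts:
  fixes w a :: "nat \<Rightarrow> 'a::comm_ring"
  shows "(\<Sum>n<N. w n * a n)
    = (\<Sum>k<N. w k) * a N + (\<Sum>n<N. (\<Sum>k<Suc n. w k) * (a n - a (Suc n)))"
  by (induction N) (simp_all add: algebra_simps)

lemma sums_by_parts_null:
  fixes a w :: "nat \<Rightarrow> real"
  assumes lim: "a \<longlonglongrightarrow> 0" and bounded: "\<And>m. \<bar>\<Sum>k<m. w k\<bar> \<le> B"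
    and "(\<lambda>n. (\<Sum>k<Suc n. w k) * (a n - a (Suc n))) sums T"
  shows "(\<lambda>n. w n * a n) sums T"
proof -
  have "(\<lambda>N. (\<Sum>k<N. w k) * a N) \<longlonglongrightarrow> 0"
  proof (rule Lim_null_comparison)
    show "\<forall>\<^sub>F N in sequentially. norm ((\<Sum>k<N. w k) * a N) \<le> B * norm (a N)"
      using bounded by (intro always_eventually allI) (simp add: abs_mult mult_right_mono)
    show "(\<lambda>N. B * norm (a N)) \<longlonglongrightarrow> 0"
      using tendsto_mult_right_zero[OF tendsto_norm_zero[OF lim], of B] by simp
  qed
  then have "(\<lambda>N. (\<Sum>k<N. w k) * a N + (\<Sum>n<N. (\<Sum>k<Suc n. w k) * (a n - a (Suc n))))
      \<longlonglongrightarrow> 0 + T"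
    using assms(3) unfolding sums_def by (rule tendsto_add)
  then show ?thesis
    unfolding sums_def sum_lessThan_by_parts[where w=w and a=a, symmetric] by simp
qed

lemma sums_times_strict_decseq_bounds:
  fixes a w :: "nat \<Rightarrow> real"
  assumes dec: "\<And>n. a (Suc n) < a n" and lim: "a \<longlonglongrightarrow> 0"
    and partial: "\<And>m. L \<le> (\<Sum>k<m. w k) \<and> (\<Sum>k<m. w k) \<le> 0"
    and first: "L < w 0" "w 0 < 0"
  shows "\<exists>T. (\<lambda>n. w n * a n) sums T \<and> L * a 0 < T \<and> T < 0"
proof -
  define W where "W m = (\<Sum>k<m. w k)" for m
  define d where "d n = a n - a (Suc n)" for n
  define e where "e n = W (Suc n) * d n" for n
  have d_pos: "d n > 0" for n using dec[of n] by (simp add: d_def)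
  have d_sums: "d sums a 0"
    using telescope_sums'[OF lim] by (simp add: d_def[abs_def])
  have W_bound: "\<bar>W m\<bar> \<le> - L" for m using partial[of m] by (simp add: W_def)
  have e_lower: "L * d n \<le> e n" and e_upper: "e n \<le> 0" for n
    using partial[of "Suc n"] d_pos[of n] by (simp_all add: e_def W_def mult_right_mono mult_nonpos_nonneg)
  have "summable e"
  proof (rule summable_comparison_test)
    have "norm (e n) \<le> - L * d n" for n
      using W_bound[of "Suc n"] d_pos[of n] by (simp add: e_def abs_mult) (metis minus_mult_left mult_right_mono less_imp_le)
    then show "\<exists>N. \<forall>n\<ge>N. norm (e n) \<le> - L * d n" by blast
    show "summable (\<lambda>n. - L * d n)"
      using d_sums summable_mult sums_summable by blast
  qed
  have e_0: "L * d 0 < e 0" "e 0 < 0"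
    using first d_pos[of 0] by (simp_all add: e_def W_def mult_strict_right_mono mult_neg_pos)
  have "0 < suminf (\<lambda>n. - e n)"
    using \<open>summable e\<close> e_upper e_0 by (intro suminf_pos2[where i=0]) (auto simp: summable_minus_iff)
  then have T_neg: "suminf e < 0"
    using suminf_minus[OF \<open>summable e\<close>] by linarith
  have "0 < suminf (\<lambda>n. e n - L * d n)"
    using \<open>summable e\<close> d_sums e_lower e_0
    by (intro suminf_pos2[where i=0] summable_diff summable_mult sums_summable) auto
  moreover have "suminf (\<lambda>n. e n - L * d n) = suminf e - L * a 0"
    using sums_diff[OF summable_sums[OF \<open>summable e\<close>] sums_mult[OF d_sums, of L]]
    by (rule sums_unique[symmetric])
  ultimately have T_lower: "L * a 0 < suminf e" by simp
  have "(\<lambda>n. w n * a n) sums suminf e"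
    using lim W_bound summable_sums[OF \<open>summable e\<close>]
    unfolding W_def e_def d_def by (rule sums_by_parts_null)
  with T_neg T_lower show ?thesis by blast
qed

lemma divide_shift_strict_antimono:
  fixes b c x y :: real
  assumes "c < b" "0 < x + c" "x < y"
  shows "(y + b) / (y + c) < (x + b) / (x + c)"
proof -
  have "(b - c) / (y + c) < (b - c) / (x + c)"
    using assms by (intro divide_strict_left_mono) auto
  moreover have "(z + b) / (z + c) = 1 + (b - c) / (z + c)" if "0 < z + c" for z
    using that by (simp add: field_simps)
  ultimately show ?thesis using assms by simp
qed

lemma tm_partial_of_real_eq_exp:
  fixes b c :: real
  assumes "-1 < b" "-1 < c"
  shows "tm_partial (of_real b) (of_real c) N
    = of_real (exp (\<Sum>n<N. tm (Suc n) * ln ((real (Suc n) + b) / (real (Suc n) + c))))"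
proof (induction N)
  case 0
  then show ?case by (simp add: tm_partial_def)
next
  case (Suc N)
  define r where "r = (real (Suc N) + b) / (real (Suc N) + c)"
  have "r > 0" using assms unfolding r_def by (auto intro!: divide_pos_pos)
  then have "complex_of_real r powi tm (Suc N) = of_real (exp (tm (Suc N) * ln r))"
    using tm_eq_1_or_minus_1[of "Suc N"] by (auto simp: exp_minus power_int_minus of_real_inverse)
  moreover have "(of_nat (Suc N) + complex_of_real b) / (of_nat (Suc N) + complex_of_real c)
      = of_real r"
    by (simp add: r_def)
  ultimately show ?case
    using Suc by (simp add: tm_partial_def exp_add r_def)
qed

lemma tm_partial_tendsto_bounds:
  fixes b c :: real
  assumes "-1 < c" "c < b"
  shows "\<exists>x. tm_partial (of_real b) (of_real c) \<longlonglongrightarrow> of_real x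
    \<and> ((c + 1) / (b + 1))^2 < x \<and> x < 1"
proof -
  define a where "a n = ln ((real (Suc n) + b) / (real (Suc n) + c))" for n
  have "a (Suc n) < a n" for n
    unfolding a_def using assms
    by (intro ln_strict_mono divide_shift_strict_antimono divide_pos_pos) auto
  moreover have "a \<longlonglongrightarrow> 0"
    unfolding a_def by real_asymp
  moreover have "-2 \<le> (\<Sum>k<m. real_of_int (tm (Suc k))) \<and> (\<Sum>k<m. real_of_int (tm (Suc k))) \<le> 0" for m
    using sum_tm_Suc_bounds[of m] unfolding of_int_sum[symmetric] by linarith
  ultimately obtain T where T: "(\<lambda>n. tm (Suc n) * a n) sums T" "-2 * a 0 < T" "T < 0"
    using sums_times_strict_decseq_bounds[where a=a and w="\<lambda>n. real_of_int (tm (Suc n))" and L="-2"]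
    by (auto simp: tm_Suc_0)
  have "exp (-2 * a 0) = ((c + 1) / (b + 1))^2"
    using assms by (simp add: a_def exp_minus exp_double add.commute flip: power_inverse)
  then have "((c + 1) / (b + 1))^2 < exp T"
    using T(2) by (metis exp_less_cancel_iff)
  moreover have "tm_partial (of_real b) (of_real c) = (\<lambda>N. of_real (exp (\<Sum>n<N. tm (Suc n) * a n)))"
    using assms tm_partial_of_real_eq_exp[of b c] by (simp add: a_def fun_eq_iff)
  then have "tm_partial (of_real b) (of_real c) \<longlonglongrightarrow> of_real (exp T)"
    using T(1) unfolding sums_def by (auto intro: tendsto_of_real tendsto_exp)
  ultimately show ?thesis using T(3) by auto
qed

lemma tm_partial_swap: "tm_partial b c N = inverse (tm_partial c b N)"
  by (simp add: tm_partial_def prod_inversef[symmetric] comp_def power_int_inverse[symmetric])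

lemma tm_partial_same:
  assumes "\<And>n. n \<ge> 1 \<Longrightarrow> of_nat n + b \<noteq> 0"
  shows "tm_partial b b N = 1"
  using assms by (simp add: tm_partial_def)

lemma tm_f_eq_inverse:
  assumes "tm_partial c b \<longlonglongrightarrow> L" "L \<noteq> 0"
  shows "tm_f b c = inverse L"
proof -
  have "tm_partial b c = (\<lambda>N. inverse (tm_partial c b N))"
    by (rule ext) (rule tm_partial_swap)
  then show ?thesis
    unfolding tm_f_def using assms by (auto intro: limI tendsto_inverse)
qed

lemma tm_f_of_real_same:
  assumes "-1 < c"
  shows "tm_f (of_real c) (of_real c) = 1"
proof -
  have "of_nat n + complex_of_real c \<noteq> 0" if "n \<ge> 1" for n
  proof -
    have "real n + c \<noteq> 0" using that assms by linarith
    then show ?thesis by (metis of_real_of_nat_eq of_real_add of_real_eq_0_iff)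
  qed
  then have "tm_partial (of_real c) (of_real c) = (\<lambda>N. 1)"
    by (intro ext tm_partial_same) simp
  then show ?thesis by (simp add: tm_f_def)
qed

lemma tm_f_of_real_bounds_gt:
  fixes b c :: real
  assumes "-1 < c" "c < b"
  shows "\<exists>x. tm_f (of_real b) (of_real c) = of_real x \<and> ((c + 1) / (b + 1))^2 < x \<and> x < 1"
  using tm_partial_tendsto_bounds[OF assms] unfolding tm_f_def by (blast intro: limI)

lemma tm_f_of_real_bounds_lt:
  fixes b c :: real
  assumes "-1 < b" "b < c"
  shows "\<exists>x. tm_f (of_real b) (of_real c) = of_real x \<and> 1 < x \<and> x < ((c + 1) / (b + 1))^2"
proof -
  obtain x where x: "tm_partial (of_real c) (of_real b) \<longlonglongrightarrow> of_real x"
    "((b + 1) / (c + 1))^2 < x" "x < 1"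
    using tm_partial_tendsto_bounds[OF assms] by blast
  have "0 < x" using zero_le_power2 x(2) by (rule le_less_trans)
  then have "tm_f (of_real b) (of_real c) = of_real (inverse x)"
    using tm_f_eq_inverse[OF x(1)] by (simp add: of_real_inverse)
  moreover have "1 < inverse x"
    using \<open>0 < x\<close> x(3) by (simp add: one_less_inverse)
  moreover have "((c + 1) / (b + 1))^2 = inverse (((b + 1) / (c + 1))^2)"
    by (simp flip: power_inverse)
  then have "inverse x < ((c + 1) / (b + 1))^2"
    using x(2) assms by (simp add: less_imp_inverse_less)
  ultimately show ?thesis by blast
qed

theorem lemma5:
  fixes b c :: real
  assumes "b > -1" and "c > -1"
  shows "(b = c \<longrightarrow> tm_f (complex_of_real b) (complex_of_real c) = 1)
       \<and> (b > c \<longrightarrow> (\<exists>x::real. tm_f (complex_of_real b) (complex_of_real c) = complex_of_real x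
              \<and> ((c + 1) / (b + 1))^2 < x \<and> x < 1))
       \<and> (b < c \<longrightarrow> (\<exists>x::real. tm_f (complex_of_real b) (complex_of_real c) = complex_of_real x
              \<and> 1 < x \<and> x < ((c + 1) / (b + 1))^2))"
  using assms tm_f_of_real_same[of c] tm_f_of_real_bounds_gt[of c b] tm_f_of_real_bounds_lt[of b c]
  by auto

end
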